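(* Let $A\in\mathbb F^{n\times n}$ be Lyapunov regular and $B\in\{A\}''_{\mathbb F}$. Then the matricization $L_{A,B}\in\mathbb F^{n^2\times n^2}$ of $\mathcal L_{A,B}$ belongs to $\overline{\{A^*\}''_{\mathbb F}}\otimes\{A^*\}''_{\mathbb F}$ (the span of Kronecker products $\bar X\otimes Y$ with $X,Y\in\{A^*\}''_{\mathbb F}$).
   Context: $\mathbb F=\mathbb R$ or $\mathbb C$; $Y^*$ is conjugate transpose; $\bar X$ is entrywise complex conjugate. $A$ is Lyapunov regular if its eigenvalues satisfy $\lambda_i+\bar\lambda_j\ne0$ for all $i,j$. $\mathcal L_Y(X)=XY+Y^*X$, and $\mathcal L_{A,B}=\mathcal L_B\circ\mathcal L_A^{-1}$. $\{A\}''_{\mathbb F}$ is the bicommutant of $A$ in $\mathbb F^{n\times n}$. The matricization of a linear map $\mathcal L:\mathbb F^{q\times q}\to\mathbb F^{n\times n}$ is the matrix $L\in\mathbb F^{n^2\times q^2}$ with $L\,\mathrm{vec}(V)=\mathrm{vec}(\mathcal L(V))$, where $\mathrm{vec}$ stacks columns. *)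

theory Defs
  imports "Jordan_Normal_Form.Char_Poly" "Jordan_Normal_Form.Conjugate"
begin

definition mconj :: "'a::conjugatable_field mat \<Rightarrow> 'a mat" where
  "mconj X = mat (dim_row X) (dim_col X) (\<lambda>(i,j). conjugate (X $$ (i,j)))"

definition madj :: "'a::conjugatable_field mat \<Rightarrow> 'a mat" where
  "madj X = mat (dim_col X) (dim_row X) (\<lambda>(i,j). conjugate (X $$ (j,i)))"

text \<open>Lyapunov regularity of a complex matrix: all eigenvalues satisfy
  lambda_i + conj(lambda_j) ~= 0.  A real matrix is Lyapunov regular iff
  its complexification is.\<close>
definition lyap_regular :: "complex mat \<Rightarrow> bool" where
  "lyap_regular A \<longleftrightarrow> (\<forall>l m. eigenvalue A l \<and> eigenvalue A m \<longrightarrow> l + cnj m \<noteq> 0)"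

definition lyap :: "'a::conjugatable_field mat \<Rightarrow> 'a mat \<Rightarrow> 'a mat" where
  "lyap Y X = X * Y + madj Y * X"

definition lyapAB :: "'a::conjugatable_field mat \<Rightarrow> 'a mat \<Rightarrow> 'a mat \<Rightarrow> 'a mat" where
  "lyapAB A B V = lyap B (THE X. X \<in> carrier_mat (dim_row A) (dim_row A) \<and> lyap A X = V)"

definition vecm :: "'a mat \<Rightarrow> 'a vec" where
  "vecm V = vec (dim_row V * dim_col V) (\<lambda>k. V $$ (k mod dim_row V, k div dim_row V))"

definition kron :: "'a::times mat \<Rightarrow> 'a mat \<Rightarrow> 'a mat" where
  "kron X Y = mat (dim_row X * dim_row Y) (dim_col X * dim_col Y)
     (\<lambda>(i,j). X $$ (i div dim_row Y, j div dim_col Y) * Y $$ (i mod dim_row Y, j mod dim_col Y))"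

definition commutant :: "nat \<Rightarrow> 'a::semiring_1 mat set \<Rightarrow> 'a mat set" where
  "commutant n S = {X \<in> carrier_mat n n. \<forall>Y\<in>S. X * Y = Y * X}"

definition bicommutant :: "nat \<Rightarrow> 'a::semiring_1 mat \<Rightarrow> 'a mat set" where
  "bicommutant n A = commutant n (commutant n {A})"

inductive_set kron_span :: "nat \<Rightarrow> 'a::conjugatable_field mat set \<Rightarrow> 'a mat set"
  for n S where
  zero: "0\<^sub>m (n*n) (n*n) \<in> kron_span n S"
| step: "M \<in> kron_span n S \<Longrightarrow> X \<in> S \<Longrightarrow> Y \<in> S \<Longrightarrow>
         c \<cdot>\<^sub>m kron (mconj X) Y + M \<in> kron_span n S"

definition matricization_in_span :: "nat \<Rightarrow> 'a::conjugatable_field mat \<Rightarrow> 'a mat \<Rightarrow> bool" where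
  "matricization_in_span n A B \<longleftrightarrow>
     (\<forall>L \<in> carrier_mat (n*n) (n*n).
        (\<forall>V \<in> carrier_mat n n. L *\<^sub>v vecm V = vecm (lyapAB A B V))
        \<longrightarrow> L \<in> kron_span n (bicommutant n (madj A)))"

end

theory Submission
  imports Defs "Jordan_Normal_Form.Schur_Decomposition"
begin

text \<open>The matricization of \<open>X \<mapsto> XY + Y\<^sup>*X\<close> is \<open>Y\<^sup>T \<otimes> I + I \<otimes> Y\<^sup>*\<close>, and
  \<open>Y\<^sup>T\<close> is the entrywise conjugate of \<open>Y\<^sup>*\<close>. Since \<open>A\<^sup>*\<close> and \<open>B\<^sup>*\<close> lie in the
  bicommutant of \<open>A\<^sup>*\<close>, both matricizations \<open>L\<^sub>A\<close> and \<open>L\<^sub>B\<close> lie in the span \<open>K\<close>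
  of the products \<open>conj X \<otimes> Y\<close>, \<open>X, Y \<in> {A\<^sup>*}''\<close>; as the bicommutant is a unital
  algebra, so is \<open>K\<close>. Lyapunov regularity makes \<open>L\<^sub>A\<close> injective, hence invertible, and by
  Cayley-Hamilton its inverse is a polynomial in \<open>L\<^sub>A\<close>, hence in \<open>K\<close>. So
  \<open>L\<^sub>A\<^sub>,\<^sub>B = L\<^sub>B L\<^sub>A\<^sup>-\<^sup>1 \<in> K\<close>. Real matrices are handled by complexification.\<close>

section \<open>Polynomials evaluated at matrices\<close>

definition poly_mat :: "'a::comm_ring_1 poly \<Rightarrow> 'a mat \<Rightarrow> 'a mat" where
  "poly_mat p A = foldr (\<lambda>a M. a \<cdot>\<^sub>m 1\<^sub>m (dim_row A) + A * M) (coeffs p) (0\<^sub>m (dim_row A) (dim_row A))"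

lemma zero_smult_mat [simp]: "(0 :: 'a :: semiring_0) \<cdot>\<^sub>m A = 0\<^sub>m (dim_row A) (dim_col A)"
  by (rule eq_matI) auto

lemma one_smult_mat [simp]: "(1 :: 'a :: monoid_mult) \<cdot>\<^sub>m A = A"
  by (rule eq_matI) auto

lemma poly_mat_0 [simp]: "poly_mat 0 A = 0\<^sub>m (dim_row A) (dim_row A)"
  by (simp add: poly_mat_def)

lemma dim_poly_mat [simp]:
  "dim_row (poly_mat p A) = dim_row A" "dim_col (poly_mat p A) = dim_row A"
proof -
  have "dim_row (foldr (\<lambda>a M. a \<cdot>\<^sub>m 1\<^sub>m (dim_row A) + A * M) xs (0\<^sub>m (dim_row A) (dim_row A))) = dim_row A
    \<and> dim_col (foldr (\<lambda>a M. a \<cdot>\<^sub>m 1\<^sub>m (dim_row A) + A * M) xs (0\<^sub>m (dim_row A) (dim_row A))) = dim_row A" for xs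
    by (induction xs) auto
  then show "dim_row (poly_mat p A) = dim_row A" "dim_col (poly_mat p A) = dim_row A"
    unfolding poly_mat_def by auto
qed

lemma poly_mat_pCons:
  assumes "A \<in> carrier_mat n n"
  shows "poly_mat (pCons a p) A = a \<cdot>\<^sub>m 1\<^sub>m n + A * poly_mat p A"
  using assms by (cases "p = 0 \<and> a = 0") (auto simp: poly_mat_def cCons_def)

lemma poly_mat_carrier [simp]:
  assumes "A \<in> carrier_mat n n"
  shows "poly_mat p A \<in> carrier_mat n n"
  by (induction p rule: pCons_induct) (use assms in \<open>auto simp: poly_mat_pCons\<close>)

lemma poly_mat_pCons_0:
  assumes A: "A \<in> carrier_mat n n"
  shows "poly_mat (pCons 0 p) A = A * poly_mat p A"
proof -
  have "A * poly_mat p A \<in> carrier_mat n n" using A by simp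
  then show ?thesis using A by (simp add: poly_mat_pCons)
qed

lemma poly_mat_add:
  assumes A: "A \<in> carrier_mat n n"
  shows "poly_mat (p + q) A = poly_mat p A + poly_mat q A"
proof (induction p q rule: poly_induct2)
  case 0
  then show ?case using A by simp
next
  case (pCons a p b q)
  have P: "poly_mat p A \<in> carrier_mat n n" and Q: "poly_mat q A \<in> carrier_mat n n"
    using A by simp_all
  have "poly_mat (pCons a p + pCons b q) A = (a + b) \<cdot>\<^sub>m 1\<^sub>m n + A * (poly_mat p A + poly_mat q A)"
    using A pCons by (simp add: poly_mat_pCons)
  also have "\<dots> = poly_mat (pCons a p) A + poly_mat (pCons b q) A"
    using A P Q by (simp add: poly_mat_pCons mult_add_distrib_mat[of _ n n _ n])
      (rule eq_matI; simp add: carrier_matD[OF A] algebra_simps)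
  finally show ?case .
qed

lemma poly_mat_smult:
  assumes A: "A \<in> carrier_mat n n"
  shows "poly_mat (Polynomial.smult c p) A = c \<cdot>\<^sub>m poly_mat p A"
proof (induction p rule: pCons_induct)
  case 0
  then show ?case using A by (auto intro: eq_matI)
next
  case (pCons a p)
  have P: "poly_mat p A \<in> carrier_mat n n" using A by simp
  show ?case using A P pCons
    by (simp add: poly_mat_pCons mult_smult_distrib[of _ n n _ n])
      (rule eq_matI; simp add: carrier_matD[OF A] algebra_simps)
qed

lemma poly_mat_mult:
  assumes A: "A \<in> carrier_mat n n"
  shows "poly_mat (p * q) A = poly_mat p A * poly_mat q A"
proof (induction p rule: pCons_induct)
  case 0
  then show ?case using carrier_matD[OF A] by simp
next
  case (pCons a p)
  have P: "poly_mat p A \<in> carrier_mat n n" and Q: "poly_mat q A \<in> carrier_mat n n"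
    using A by simp_all
  have "poly_mat (pCons a p * q) A = a \<cdot>\<^sub>m poly_mat q A + A * (poly_mat p A * poly_mat q A)"
    using A P Q pCons by (simp add: poly_mat_add poly_mat_smult poly_mat_pCons_0)
  also have "\<dots> = poly_mat (pCons a p) A * poly_mat q A"
    using A P Q by (simp add: poly_mat_pCons add_mult_distrib_mat[of _ n n _ _ n] mult_smult_assoc_mat[of _ n n _ n]
        carrier_matD[OF A] assoc_mult_mat[of _ n n _ n _ n])
  finally show ?case .
qed

lemma poly_mat_1 [simp]:
  assumes A: "A \<in> carrier_mat n n"
  shows "poly_mat 1 A = 1\<^sub>m n"
  using A by (simp add: one_pCons poly_mat_pCons)

lemma poly_mat_linear:
  assumes A: "A \<in> carrier_mat n n"
  shows "poly_mat [:- e, 1:] A = char_matrix A e"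
  using A poly_mat_1[OF A] by (simp add: poly_mat_pCons char_matrix_def one_pCons) (rule eq_matI; simp)

lemma poly_mat_intertwine:
  assumes A: "A \<in> carrier_mat m m" and C: "C \<in> carrier_mat n n" and X: "X \<in> carrier_mat n m"
    and XA: "X * A = C * X"
  shows "X * poly_mat p A = poly_mat p C * X"
proof (induction p rule: pCons_induct)
  case 0
  then show ?case using A C X by simp
next
  case (pCons a p)
  have PA: "poly_mat p A \<in> carrier_mat m m" and PC: "poly_mat p C \<in> carrier_mat n n"
    using A C by simp_all
  have "X * poly_mat (pCons a p) A = a \<cdot>\<^sub>m X + X * A * poly_mat p A"
    using A X PA by (simp add: poly_mat_pCons mult_add_distrib_mat[of _ n m _ m] mult_smult_distrib[of _ n m _ m]
        assoc_mult_mat[of _ n m _ m _ m])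
  also have "X * A * poly_mat p A = C * (poly_mat p C * X)"
    using A C X PA PC pCons.IH by (simp add: XA assoc_mult_mat[of _ n n _ m _ m])
  also have "a \<cdot>\<^sub>m X + C * (poly_mat p C * X) = poly_mat (pCons a p) C * X"
    using C X PC by (simp add: poly_mat_pCons add_mult_distrib_mat[of _ n n _ _ m] mult_smult_assoc_mat[of _ n n _ m]
        assoc_mult_mat[OF C PC X])
  finally show ?case .
qed

lemma (in comm_ring_hom) poly_mat_hom:
  assumes A: "A \<in> carrier_mat n n"
  shows "mat\<^sub>h (poly_mat p A) = poly_mat (map_poly hom p) (mat\<^sub>h A)"
proof (induction p rule: pCons_induct)
  case 0
  then show ?case using A by (auto intro: eq_matI)
next
  case (pCons a p)
  have P: "poly_mat p A \<in> carrier_mat n n" using A by simp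
  have "mat\<^sub>h (poly_mat (pCons a p) A) = mat\<^sub>h (a \<cdot>\<^sub>m 1\<^sub>m n) + mat\<^sub>h (A * poly_mat p A)"
    using A P by (simp add: poly_mat_pCons) (rule eq_matI; simp add: carrier_matD[OF P] hom_add)
  also have "mat\<^sub>h (a \<cdot>\<^sub>m 1\<^sub>m n) = hom a \<cdot>\<^sub>m 1\<^sub>m n" by (rule eq_matI) auto
  also have "mat\<^sub>h (A * poly_mat p A) = mat\<^sub>h A * mat\<^sub>h (poly_mat p A)"
    using A P by (rule mat_hom_mult)
  finally show ?case
    using A pCons by (simp add: poly_mat_pCons poly_mat_pCons[of "mat\<^sub>h A" n])
qed

lemma poly_mat_similar:
  assumes "similar_mat A B"
  shows "poly_mat p A = 0\<^sub>m (dim_row A) (dim_row A) \<longleftrightarrow> poly_mat p B = 0\<^sub>m (dim_row B) (dim_row B)"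
proof -
  from similar_matD[OF assms] obtain n P Q where "{A, B, P, Q} \<subseteq> carrier_mat n n"
    and PQ: "P * Q = 1\<^sub>m n" and QP: "Q * P = 1\<^sub>m n" and APBQ: "A = P * B * Q" by blast
  then have A: "A \<in> carrier_mat n n" and B: "B \<in> carrier_mat n n"
    and P: "P \<in> carrier_mat n n" and Q: "Q \<in> carrier_mat n n" by auto
  have PB: "P * B \<in> carrier_mat n n" using P B by simp
  have "A * P = P * B * (Q * P)" unfolding APBQ using assoc_mult_mat[OF PB Q P] .
  then have "A * P = P * B" using right_mult_one_mat[OF PB] by (simp add: QP)
  then have AP: "poly_mat p A * P = P * poly_mat p B"
    using poly_mat_intertwine[OF B A P] by simp
  have "Q * A = Q * P * B * Q"
    unfolding APBQ using assoc_mult_mat[OF Q P B] assoc_mult_mat[OF Q PB Q] assoc_mult_mat[OF _ B Q, of "Q * P"] Q P by simp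
  then have "Q * A = B * Q" using B by (simp add: QP)
  then have QA: "Q * poly_mat p A = poly_mat p B * Q"
    using poly_mat_intertwine[OF A B Q] by simp
  have pA: "poly_mat p A \<in> carrier_mat n n" and pB: "poly_mat p B \<in> carrier_mat n n" using A B by simp_all
  have "poly_mat p A = P * Q * poly_mat p A" using left_mult_one_mat[OF pA] by (simp add: PQ)
  then have "poly_mat p A = P * (Q * poly_mat p A)" using assoc_mult_mat[OF P Q pA] by simp
  moreover have "poly_mat p B = Q * P * poly_mat p B" using left_mult_one_mat[OF pB] by (simp add: QP)
  then have "poly_mat p B = Q * (poly_mat p A * P)" using assoc_mult_mat[OF Q P pB] by (simp add: AP)
  ultimately show ?thesis using A B P Q QA by auto
qed

lemma eq_mat_by_mult_vec:
  fixes A B :: "'a::semiring_1 mat"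
  assumes A: "A \<in> carrier_mat nr nc" and B: "B \<in> carrier_mat nr nc"
    and eq: "\<And>v. v \<in> carrier_vec nc \<Longrightarrow> A *\<^sub>v v = B *\<^sub>v v"
  shows "A = B"
proof (rule eq_matI)
  fix i j assume i: "i < dim_row B" and j: "j < dim_col B"
  have "(A *\<^sub>v unit_vec nc j) $ i = (B *\<^sub>v unit_vec nc j) $ i" using eq[of "unit_vec nc j"] by simp
  then show "A $$ (i, j) = B $$ (i, j)" using A B i j by simp
qed (use A B in auto)

text \<open>As \<open>T\<close> is upper triangular, \<open>T - T\<^sub>k\<^sub>k\<close> maps vectors supported on the first
  \<open>k + 1\<close> coordinates to vectors supported on the first \<open>k\<close>.\<close>
lemma upper_triangular_diag_factors_annihilate:
  fixes T :: "'a::field mat"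
  assumes T: "T \<in> carrier_mat n n" and ut: "upper_triangular T"
  shows "k \<le> n \<Longrightarrow> v \<in> carrier_vec n \<Longrightarrow> (\<And>i. k \<le> i \<Longrightarrow> i < n \<Longrightarrow> v $ i = 0) \<Longrightarrow>
    poly_mat (\<Prod>i\<leftarrow>[0..<k]. [:- T $$ (i, i), 1:]) T *\<^sub>v v = 0\<^sub>v n"
proof (induction k arbitrary: v)
  case 0
  then have "v = 0\<^sub>v n" by (intro eq_vecI) auto
  then show ?case using T by (simp add: poly_mat_pCons)
next
  case (Suc k)
  define F where "F = char_matrix T (T $$ (k, k))"
  have F: "F \<in> carrier_mat n n" using T by (simp add: F_def)
  define w where "w = F *\<^sub>v v"
  have w: "w \<in> carrier_vec n" using F Suc.prems(2) by (simp add: w_def)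
  have "w $ i = 0" if ki: "k \<le> i" and i: "i < n" for i
  proof -
    have "F $$ (i, j) * v $ j = 0" if j: "j < n" for j
    proof (cases "j < i")
      case True
      then show ?thesis using ut T i j by (auto simp: F_def char_matrix_def upper_triangular_def)
    next
      case False
      then show ?thesis
        using Suc.prems(3)[of j] ki T i j by (cases "j = k") (auto simp: F_def char_matrix_def)
    qed
    then show ?thesis using F Suc.prems(2) i by (simp add: w_def scalar_prod_def sum.neutral)
  qed
  then have "poly_mat (\<Prod>i\<leftarrow>[0..<k]. [:- T $$ (i, i), 1:]) T *\<^sub>v w = 0\<^sub>v n"
    using Suc.IH[OF _ w] Suc.prems(1) by simp
  moreover have "poly_mat (\<Prod>i\<leftarrow>[0..<Suc k]. [:- T $$ (i, i), 1:]) T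
      = poly_mat (\<Prod>i\<leftarrow>[0..<k]. [:- T $$ (i, i), 1:]) T * F"
    unfolding F_def poly_mat_linear[OF T, symmetric] poly_mat_mult[OF T, symmetric] by simp
  ultimately show ?case
    using T F Suc.prems(2) by (simp add: w_def assoc_mult_mat_vec[of _ n n _ n])
qed

lemma cayley_hamilton_upper_triangular:
  fixes T :: "'a::field mat"
  assumes T: "T \<in> carrier_mat n n" and ut: "upper_triangular T"
  shows "poly_mat (char_poly T) T = 0\<^sub>m n n"
proof (rule eq_mat_by_mult_vec[of _ n n])
  fix v :: "'a vec" assume v: "v \<in> carrier_vec n"
  have "char_poly T = (\<Prod>i\<leftarrow>[0..<n]. [:- T $$ (i, i), 1:])"
    using char_poly_upper_triangular[OF T ut] T by (simp add: diag_mat_def comp_def)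
  then have "poly_mat (char_poly T) T *\<^sub>v v = 0\<^sub>v n"
    using upper_triangular_diag_factors_annihilate[OF T ut _ v] by simp
  moreover have "0\<^sub>m n n *\<^sub>v v = 0\<^sub>v n" using v by (intro eq_vecI) (auto simp: scalar_prod_def)
  ultimately show "poly_mat (char_poly T) T *\<^sub>v v = 0\<^sub>m n n *\<^sub>v v" by simp
qed (use T in simp_all)

lemma cayley_hamilton_complex:
  fixes A :: "complex mat"
  assumes A: "A \<in> carrier_mat n n"
  shows "poly_mat (char_poly A) A = 0\<^sub>m n n"
proof -
  obtain es where "char_poly A = (\<Prod>e\<leftarrow>es. [:- e, 1:])"
    using char_poly_factorized[OF A] by blast
  then obtain B where B: "B \<in> carrier_mat n n" and ut: "upper_triangular B" and sim: "similar_mat A B"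
    using schur_decomposition_exists[OF A] by blast
  have "poly_mat (char_poly B) B = 0\<^sub>m n n" using cayley_hamilton_upper_triangular[OF B ut] .
  then show ?thesis
    using poly_mat_similar[OF sim] char_poly_similar[OF sim] A B by simp
qed

lemma cayley_hamilton_real:
  fixes A :: "real mat"
  assumes A: "A \<in> carrier_mat n n"
  shows "poly_mat (char_poly A) A = 0\<^sub>m n n"
proof -
  have "map_mat complex_of_real (poly_mat (char_poly A) A)
      = poly_mat (char_poly (map_mat complex_of_real A)) (map_mat complex_of_real A)"
    using A by (simp add: of_real_hom.poly_mat_hom of_real_hom.char_poly_hom)
  also have "\<dots> = 0\<^sub>m n n" using A by (simp add: cayley_hamilton_complex)
  also have "\<dots> = map_mat complex_of_real (0\<^sub>m n n)" by (rule eq_matI) auto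
  finally show ?thesis by (rule of_real_hom.mat_hom_inj)
qed

section \<open>Unital matrix algebras\<close>

locale mat_algebra =
  fixes n :: nat and S :: "'a::field mat set"
  assumes carrier: "S \<subseteq> carrier_mat n n"
    and one_closed: "1\<^sub>m n \<in> S"
    and add_closed: "X \<in> S \<Longrightarrow> Y \<in> S \<Longrightarrow> X + Y \<in> S"
    and smult_closed: "X \<in> S \<Longrightarrow> c \<cdot>\<^sub>m X \<in> S"
    and mult_closed: "X \<in> S \<Longrightarrow> Y \<in> S \<Longrightarrow> X * Y \<in> S"
begin

lemma poly_mat_closed:
  assumes M: "M \<in> S"
  shows "poly_mat p M \<in> S"
proof (induction p rule: pCons_induct)
  case 0
  have "0 \<cdot>\<^sub>m 1\<^sub>m n \<in> S" by (rule smult_closed[OF one_closed])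
  then show ?case using M carrier by auto
next
  case (pCons a p)
  then show ?case
    using M carrier by (auto simp: poly_mat_pCons intro!: add_closed smult_closed one_closed mult_closed)
qed

text \<open>Writing \<open>char_poly M = a + x q\<close>, Cayley-Hamilton gives \<open>M q(M) = -a I\<close> with
  \<open>a = \<plusminus>det M \<noteq> 0\<close>, so the inverse of \<open>M\<close> is a polynomial in \<open>M\<close>.\<close>
lemma inverse_closed:
  assumes M: "M \<in> S" and det: "det M \<noteq> 0"
    and cayley_hamilton: "poly_mat (char_poly M) M = 0\<^sub>m n n"
  shows "\<exists>R\<in>S. M * R = 1\<^sub>m n"
proof -
  have Mc: "M \<in> carrier_mat n n" using M carrier by auto
  obtain a q where cp: "char_poly M = pCons a q" by (rule pCons_cases)
  have "\<not> eigenvalue M 0"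
    using det eigenvalue_det[OF Mc] Mc by (simp add: char_matrix_def)
  then have a: "a \<noteq> 0" using eigenvalue_root_char_poly[OF Mc, of 0] by (simp add: cp)
  define R where "R = (- 1 / a) \<cdot>\<^sub>m poly_mat q M"
  have Q: "poly_mat q M \<in> carrier_mat n n" using Mc by simp
  have zero: "a \<cdot>\<^sub>m 1\<^sub>m n + M * poly_mat q M = 0\<^sub>m n n"
    using cayley_hamilton Mc by (simp add: cp poly_mat_pCons)
  have "M * R = 1\<^sub>m n"
  proof (rule eq_matI)
    fix i j assume ij: "i < dim_row (1\<^sub>m n :: 'a mat)" "j < dim_col (1\<^sub>m n :: 'a mat)"
    have "(a \<cdot>\<^sub>m 1\<^sub>m n + M * poly_mat q M) $$ (i, j) = 0" using zero ij by simp
    then have "(M * poly_mat q M) $$ (i, j) = - a * 1\<^sub>m n $$ (i, j)"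
      using ij Mc carrier_matD[OF Q] by (auto simp: eq_neg_iff_add_eq_0 add.commute)
    then show "(M * R) $$ (i, j) = 1\<^sub>m n $$ (i, j)"
      using ij Mc carrier_matD[OF Q] a by (auto simp: R_def mult_smult_distrib[OF Mc Q])
  qed (use Mc Q in \<open>auto simp: R_def\<close>)
  moreover have "R \<in> S" unfolding R_def by (intro smult_closed poly_mat_closed M)
  ultimately show ?thesis by blast
qed

end

section \<open>Vectorization and Kronecker products\<close>

lemma sum_mult_range_split:
  fixes f :: "nat \<Rightarrow> 'b::comm_monoid_add"
  shows "(\<Sum>k = 0..<m * n. f k) = (\<Sum>a = 0..<m. \<Sum>b = 0..<n. f (a * n + b))"
proof -
  have "(\<Sum>k\<in>{a * n..<a * n + n}. f k) = (\<Sum>b = 0..<n. f (a * n + b))" for a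
    using sum.shift_bounds_nat_ivl[of f 0 "a * n" n] by (simp add: ac_simps)
  then show ?thesis
    using sum.nat_group[of f n m] by (simp add: atLeast0LessThan)
qed

lemma div_mod_less_square:
  fixes k n :: nat
  assumes "k < n * n"
  shows "k div n < n" "k mod n < n"
proof -
  have "n > 0" using assms by (cases n) auto
  then show "k div n < n" "k mod n < n" using assms by (auto simp: less_mult_imp_div_less)
qed

lemma vecm_carrier [simp]: "V \<in> carrier_mat n n \<Longrightarrow> vecm V \<in> carrier_vec (n * n)"
  by (auto simp: vecm_def)

lemma dim_vecm [simp]: "dim_vec (vecm V) = dim_row V * dim_col V"
  by (simp add: vecm_def)

lemma vecm_index: "V \<in> carrier_mat n n \<Longrightarrow> k < n * n \<Longrightarrow> vecm V $ k = V $$ (k mod n, k div n)"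
  by (auto simp: vecm_def)

lemma vecm_add: "V \<in> carrier_mat n n \<Longrightarrow> W \<in> carrier_mat n n \<Longrightarrow> vecm (V + W) = vecm V + vecm W"
  by (rule eq_vecI) (auto simp: vecm_def div_mod_less_square)

lemma vecm_zero: "vecm (0\<^sub>m n n) = 0\<^sub>v (n * n)"
  by (rule eq_vecI) (auto simp: vecm_def div_mod_less_square)

lemma vecm_inj:
  assumes V: "V \<in> carrier_mat n n" and W: "W \<in> carrier_mat n n" and eq: "vecm V = vecm W"
  shows "V = W"
proof (rule eq_matI)
  fix i j assume i: "i < dim_row W" and j: "j < dim_col W"
  have "j * n + i < Suc j * n" using i W by simp
  also have "\<dots> \<le> n * n" using j W by (intro mult_le_mono1) simp
  finally have k: "j * n + i < n * n" .
  have "vecm V $ (j * n + i) = vecm W $ (j * n + i)" using eq by simp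
  then show "V $$ (i, j) = W $$ (i, j)" using V W i j k by (simp add: vecm_index)
qed (use V W in auto)

lemma vecm_surj:
  assumes "v \<in> carrier_vec (n * n)"
  shows "\<exists>V \<in> carrier_mat n n. vecm V = v"
proof
  show "vecm (mat n n (\<lambda>(i, j). v $ (j * n + i))) = v"
    using assms by (intro eq_vecI) (auto simp: vecm_def div_mod_less_square)
qed simp

lemma kron_carrier [simp]:
  "P \<in> carrier_mat n n \<Longrightarrow> Q \<in> carrier_mat n n \<Longrightarrow> kron P Q \<in> carrier_mat (n * n) (n * n)"
  by (auto simp: kron_def)

lemma dim_kron [simp]:
  "dim_row (kron P Q) = dim_row P * dim_row Q" "dim_col (kron P Q) = dim_col P * dim_col Q"
  by (auto simp: kron_def)

lemma kron_index:
  "P \<in> carrier_mat n n \<Longrightarrow> Q \<in> carrier_mat n n \<Longrightarrow> i < n * n \<Longrightarrow> j < n * n \<Longrightarrow>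
   kron P Q $$ (i, j) = P $$ (i div n, j div n) * Q $$ (i mod n, j mod n)"
  by (auto simp: kron_def)

lemma kron_mult_vecm:
  fixes P Q X :: "'a::comm_ring_1 mat"
  assumes P: "P \<in> carrier_mat n n" and Q: "Q \<in> carrier_mat n n" and X: "X \<in> carrier_mat n n"
  shows "kron P Q *\<^sub>v vecm X = vecm (Q * X * transpose_mat P)"
proof (rule eq_vecI)
  fix i assume "i < dim_vec (vecm (Q * X * transpose_mat P))"
  then have i: "i < n * n" using P Q X by (simp add: vecm_def)
  have "(kron P Q *\<^sub>v vecm X) $ i = (\<Sum>k = 0..<n * n. kron P Q $$ (i, k) * vecm X $ k)"
    using i P Q X by (auto simp: scalar_prod_def intro!: sum.cong)
  also have "\<dots> = (\<Sum>k = 0..<n * n. P $$ (i div n, k div n) * Q $$ (i mod n, k mod n) * X $$ (k mod n, k div n))"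
    using i P Q X by (auto simp: kron_index vecm_index intro!: sum.cong)
  also have "\<dots> = (\<Sum>a = 0..<n. \<Sum>b = 0..<n. P $$ (i div n, a) * Q $$ (i mod n, b) * X $$ (b, a))"
    by (simp add: sum_mult_range_split)
  also have "\<dots> = (\<Sum>a = 0..<n. (\<Sum>b = 0..<n. Q $$ (i mod n, b) * X $$ (b, a)) * P $$ (i div n, a))"
    by (auto simp: sum_distrib_right sum_distrib_left ac_simps intro!: sum.cong)
  also have "\<dots> = (Q * X * transpose_mat P) $$ (i mod n, i div n)"
    using P Q X i by (simp add: scalar_prod_def div_mod_less_square del: assoc_mult_mat)
  also have "\<dots> = vecm (Q * X * transpose_mat P) $ i"
    using vecm_index[OF mult_carrier_mat[OF mult_carrier_mat[OF Q X] transpose_carrier_mat[THEN iffD2, OF P]] i]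
    by simp
  finally show "(kron P Q *\<^sub>v vecm X) $ i = vecm (Q * X * transpose_mat P) $ i" .
qed (use P Q X in \<open>auto simp: vecm_def kron_def\<close>)

lemma kron_mult:
  fixes P Q P' Q' :: "'a::comm_ring_1 mat"
  assumes P: "P \<in> carrier_mat n n" and Q: "Q \<in> carrier_mat n n"
    and P': "P' \<in> carrier_mat n n" and Q': "Q' \<in> carrier_mat n n"
  shows "kron P Q * kron P' Q' = kron (P * P') (Q * Q')"
proof (rule eq_matI)
  fix i j assume "i < dim_row (kron (P * P') (Q * Q'))" "j < dim_col (kron (P * P') (Q * Q'))"
  then have i: "i < n * n" and j: "j < n * n" using P Q P' Q' by (auto simp: kron_def)
  have "(kron P Q * kron P' Q') $$ (i, j) = (\<Sum>k = 0..<n * n. kron P Q $$ (i, k) * kron P' Q' $$ (k, j))"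
    using i j P Q P' Q' by (auto simp: scalar_prod_def)
  also have "\<dots> = (\<Sum>k = 0..<n * n.
      (P $$ (i div n, k div n) * P' $$ (k div n, j div n)) * (Q $$ (i mod n, k mod n) * Q' $$ (k mod n, j mod n)))"
    using i j P Q P' Q' by (auto simp: kron_index ac_simps intro!: sum.cong)
  also have "\<dots> = (\<Sum>a = 0..<n. P $$ (i div n, a) * P' $$ (a, j div n))
      * (\<Sum>b = 0..<n. Q $$ (i mod n, b) * Q' $$ (b, j mod n))"
    by (simp add: sum_mult_range_split sum_product)
  also have "\<dots> = kron (P * P') (Q * Q') $$ (i, j)"
    using P Q P' Q' i j
    by (simp add: kron_index[OF mult_carrier_mat[OF P P'] mult_carrier_mat[OF Q Q'] i j]
        scalar_prod_def div_mod_less_square)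
  finally show "(kron P Q * kron P' Q') $$ (i, j) = kron (P * P') (Q * Q') $$ (i, j)" .
qed (use P Q P' Q' in \<open>auto simp: kron_def\<close>)

lemma kron_one: "kron (1\<^sub>m n) (1\<^sub>m n :: 'a::comm_ring_1 mat) = 1\<^sub>m (n * n)"
proof (rule eq_matI)
  fix i j assume "i < dim_row (1\<^sub>m (n * n) :: 'a mat)" "j < dim_col (1\<^sub>m (n * n) :: 'a mat)"
  then have i: "i < n * n" and j: "j < n * n" by auto
  have "i div n = j div n \<and> i mod n = j mod n \<longleftrightarrow> i = j"
    by (metis div_mult_mod_eq)
  then show "kron (1\<^sub>m n) (1\<^sub>m n :: 'a mat) $$ (i, j) = 1\<^sub>m (n * n) $$ (i, j)"
    using i j by (auto simp: kron_index[OF one_carrier_mat one_carrier_mat] div_mod_less_square)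
qed (auto simp: kron_def)

section \<open>Conjugation and bicommutants\<close>

lemma conjugate_one [simp]: "conjugate (1 :: 'a::conjugatable_field) = 1"
proof -
  have "conjugate (1 :: 'a) * conjugate 1 = conjugate 1 * 1"
    by (metis conjugate_dist_mul mult_1_right)
  then show ?thesis by simp
qed

lemma dim_mconj [simp]: "dim_row (mconj X) = dim_row X" "dim_col (mconj X) = dim_col X"
  by (auto simp: mconj_def)

lemma dim_madj [simp]: "dim_row (madj X) = dim_col X" "dim_col (madj X) = dim_row X"
  by (auto simp: madj_def)

lemma mconj_carrier [simp]: "X \<in> carrier_mat n m \<Longrightarrow> mconj X \<in> carrier_mat n m"
  by (auto simp: mconj_def)

lemma madj_carrier [simp]: "X \<in> carrier_mat n m \<Longrightarrow> madj X \<in> carrier_mat m n"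
  by (auto simp: madj_def)

lemma mconj_index [simp]:
  "i < dim_row X \<Longrightarrow> j < dim_col X \<Longrightarrow> mconj X $$ (i, j) = conjugate (X $$ (i, j))"
  by (auto simp: mconj_def)

lemma madj_index [simp]:
  "i < dim_col X \<Longrightarrow> j < dim_row X \<Longrightarrow> madj X $$ (i, j) = conjugate (X $$ (j, i))"
  by (auto simp: madj_def)

lemma mconj_mult:
  fixes X Y :: "'a::conjugatable_field mat"
  assumes "X \<in> carrier_mat n k" "Y \<in> carrier_mat k m"
  shows "mconj (X * Y) = mconj X * mconj Y"
  by (rule eq_matI) (use assms in \<open>auto simp: scalar_prod_def sum_conjugate conjugate_dist_mul\<close>)

lemma madj_mult:
  fixes X Y :: "'a::conjugatable_field mat"
  assumes "X \<in> carrier_mat n k" "Y \<in> carrier_mat k m"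
  shows "madj (X * Y) = madj Y * madj X"
  by (rule eq_matI) (use assms in \<open>auto simp: scalar_prod_def sum_conjugate conjugate_dist_mul ac_simps\<close>)

lemma madj_madj [simp]: "madj (madj (X :: 'a::conjugatable_field mat)) = X"
  by (rule eq_matI) auto

lemma mconj_one [simp]: "mconj (1\<^sub>m n :: 'a::conjugatable_field mat) = 1\<^sub>m n"
  by (rule eq_matI) auto

lemma transpose_mconj_madj: "transpose_mat (mconj (madj (Y :: 'a::conjugatable_field mat))) = Y"
  by (rule eq_matI) auto

lemma commutant_carrier: "commutant n S \<subseteq> carrier_mat n n"
  by (auto simp: commutant_def)

lemma mat_algebra_commutant:
  fixes S :: "'a::field mat set"
  assumes S: "S \<subseteq> carrier_mat n n"
  shows "mat_algebra n (commutant n S)"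
proof
  fix X Y c assume X: "X \<in> commutant n S" and Y: "Y \<in> commutant n S"
  have Xc: "X \<in> carrier_mat n n" and Yc: "Y \<in> carrier_mat n n" using X Y by (auto simp: commutant_def)
  have XZ: "X * Z = Z * X" and YZ: "Y * Z = Z * Y" if "Z \<in> S" for Z
    using X Y that by (auto simp: commutant_def)
  show "X + Y \<in> commutant n S"
    unfolding commutant_def
  proof (intro CollectI conjI ballI)
    fix Z assume Z: "Z \<in> S"
    then have Zc: "Z \<in> carrier_mat n n" using S by auto
    have "(X + Y) * Z = X * Z + Y * Z" using Xc Yc Zc by (rule add_mult_distrib_mat)
    also have "\<dots> = Z * X + Z * Y" using XZ[OF Z] YZ[OF Z] by simp
    also have "\<dots> = Z * (X + Y)" using Zc Xc Yc by (rule mult_add_distrib_mat[symmetric])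
    finally show "(X + Y) * Z = Z * (X + Y)" .
  qed (use Xc Yc in simp)
  show "c \<cdot>\<^sub>m X \<in> commutant n S"
    unfolding commutant_def
  proof (intro CollectI conjI ballI)
    fix Z assume Z: "Z \<in> S"
    then have Zc: "Z \<in> carrier_mat n n" using S by auto
    have "(c \<cdot>\<^sub>m X) * Z = c \<cdot>\<^sub>m (X * Z)" using Xc Zc by (rule mult_smult_assoc_mat)
    also have "\<dots> = Z * (c \<cdot>\<^sub>m X)" using Zc Xc by (simp add: XZ[OF Z] mult_smult_distrib[OF Zc Xc])
    finally show "(c \<cdot>\<^sub>m X) * Z = Z * (c \<cdot>\<^sub>m X)" .
  qed (use Xc in simp)
  show "X * Y \<in> commutant n S"
    unfolding commutant_def
  proof (intro CollectI conjI ballI)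
    fix Z assume Z: "Z \<in> S"
    then have Zc: "Z \<in> carrier_mat n n" using S by auto
    have "X * Y * Z = X * (Z * Y)" using Xc Yc Zc YZ[OF Z] by simp
    also have "\<dots> = X * Z * Y" using Xc Yc Zc by simp
    also have "\<dots> = Z * (X * Y)" using Xc Yc Zc by (simp add: XZ[OF Z])
    finally show "X * Y * Z = Z * (X * Y)" .
  qed (use Xc Yc in simp)
qed (use S in \<open>auto simp: commutant_def\<close>)

lemma mat_algebra_bicommutant: "mat_algebra n (bicommutant n (A :: 'a::field mat))"
  unfolding bicommutant_def by (intro mat_algebra_commutant commutant_carrier)

lemma self_in_bicommutant: "A \<in> carrier_mat n n \<Longrightarrow> A \<in> bicommutant n A"
  by (auto simp: bicommutant_def commutant_def)

lemma madj_in_bicommutant_madj: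
  fixes A B :: "'a::conjugatable_field mat"
  assumes A: "A \<in> carrier_mat n n" and B: "B \<in> bicommutant n A"
  shows "madj B \<in> bicommutant n (madj A)"
  unfolding bicommutant_def commutant_def
proof (intro CollectI conjI ballI)
  have Bc: "B \<in> carrier_mat n n" using B by (auto simp: bicommutant_def commutant_def)
  then show "madj B \<in> carrier_mat n n" by simp
  fix Z assume "Z \<in> {X \<in> carrier_mat n n. \<forall>Y\<in>{madj A}. X * Y = Y * X}"
  then have Zc: "Z \<in> carrier_mat n n" and ZA: "Z * madj A = madj A * Z" by auto
  have "madj (Z * madj A) = madj (madj A * Z)" using ZA by simp
  then have "A * madj Z = madj Z * A" using A Zc by (simp add: madj_mult[of _ n n _ n])
  then have "madj Z \<in> commutant n {A}" using Zc by (auto simp: commutant_def)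
  then have "B * madj Z = madj Z * B" using B by (auto simp: bicommutant_def commutant_def)
  then have "madj (B * madj Z) = madj (madj Z * B)" by simp
  then show "madj B * Z = Z * madj B" using Bc Zc by (simp add: madj_mult[of _ n n _ n])
qed

section \<open>The Kronecker span of a matrix algebra\<close>

context
  fixes n :: nat and S :: "'a::conjugatable_field mat set"
  assumes alg: "mat_algebra n S"
begin

interpretation mat_algebra n S by (rule alg)

lemma kron_span_carrier: "M \<in> kron_span n S \<Longrightarrow> M \<in> carrier_mat (n * n) (n * n)"
  by (induction rule: kron_span.induct) (use carrier in auto)

lemma kron_span_add:
  assumes M: "M \<in> kron_span n S" and N: "N \<in> kron_span n S"
  shows "M + N \<in> kron_span n S"
  using M
proof induction
  case zero
  then show ?case using kron_span_carrier[OF N] N by simp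
next
  case (step M X Y c)
  have "X \<in> carrier_mat n n" "Y \<in> carrier_mat n n" using step carrier by auto
  then have "c \<cdot>\<^sub>m kron (mconj X) Y + M + N = c \<cdot>\<^sub>m kron (mconj X) Y + (M + N)"
    using kron_span_carrier[OF N] kron_span_carrier[OF step(1)]
    by (intro assoc_add_mat[of _ "n * n" "n * n"]) auto
  then show ?case using step by (simp add: kron_span.step)
qed

lemma kron_span_smult:
  assumes M: "M \<in> kron_span n S"
  shows "d \<cdot>\<^sub>m M \<in> kron_span n S"
  using M
proof induction
  case zero
  then show ?case by (simp add: kron_span.zero)
next
  case (step M X Y c)
  have "X \<in> carrier_mat n n" "Y \<in> carrier_mat n n" using step carrier by auto
  then have K: "kron (mconj X) Y \<in> carrier_mat (n * n) (n * n)" by simp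
  have "d \<cdot>\<^sub>m (c \<cdot>\<^sub>m kron (mconj X) Y + M) = (d * c) \<cdot>\<^sub>m kron (mconj X) Y + d \<cdot>\<^sub>m M"
    using carrier_matD[OF K] kron_span_carrier[OF step(1)] by (intro eq_matI) (auto simp: algebra_simps)
  then show ?case using step by (simp add: kron_span.step)
qed

lemma kron_in_kron_span:
  assumes X: "X \<in> S" and Y: "Y \<in> S"
  shows "kron (mconj X) Y \<in> kron_span n S"
proof -
  have "1 \<cdot>\<^sub>m kron (mconj X) Y + 0\<^sub>m (n * n) (n * n) \<in> kron_span n S"
    by (rule kron_span.step[OF kron_span.zero X Y])
  moreover have "X \<in> carrier_mat n n" "Y \<in> carrier_mat n n" using X Y carrier by auto
  ultimately show ?thesis by simp
qed

lemma kron_span_mult_kron: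
  assumes X: "X \<in> S" and Y: "Y \<in> S" and N: "N \<in> kron_span n S"
  shows "kron (mconj X) Y * N \<in> kron_span n S"
  using N
proof induction
  case zero
  have "X \<in> carrier_mat n n" "Y \<in> carrier_mat n n" using X Y carrier by auto
  then show ?case by (simp add: kron_span.zero)
next
  case (step M X' Y' c)
  have c: "X \<in> carrier_mat n n" "Y \<in> carrier_mat n n" "X' \<in> carrier_mat n n" "Y' \<in> carrier_mat n n"
    "M \<in> carrier_mat (n * n) (n * n)"
    using X Y step carrier kron_span_carrier[OF step(1)] by auto
  have "kron (mconj X) Y * (c \<cdot>\<^sub>m kron (mconj X') Y' + M)
      = c \<cdot>\<^sub>m (kron (mconj X) Y * kron (mconj X') Y') + kron (mconj X) Y * M"
    using c by (simp add: mult_add_distrib_mat[of _ "n * n" "n * n" _ "n * n"]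
        mult_smult_distrib[of _ "n * n" "n * n" _ "n * n"])
  also have "kron (mconj X) Y * kron (mconj X') Y' = kron (mconj (X * X')) (Y * Y')"
    using c by (simp add: kron_mult[of _ n] mconj_mult[of _ n n _ n])
  finally show ?case
    using step X Y by (auto intro!: kron_span_add kron_span_smult kron_in_kron_span mult_closed)
qed

lemma mat_algebra_kron_span: "mat_algebra (n * n) (kron_span n S)"
proof
  show "kron_span n S \<subseteq> carrier_mat (n * n) (n * n)" using kron_span_carrier by blast
  show "1\<^sub>m (n * n) \<in> kron_span n S"
    using kron_in_kron_span[OF one_closed one_closed] by (simp add: kron_one)
  fix M N c assume M: "M \<in> kron_span n S" and N: "N \<in> kron_span n S"
  show "M + N \<in> kron_span n S" using M N by (rule kron_span_add)
  show "c \<cdot>\<^sub>m M \<in> kron_span n S" using M by (rule kron_span_smult)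
  show "M * N \<in> kron_span n S"
    using M
  proof induction
    case zero
    then show ?case using kron_span_carrier[OF N] by (auto simp: kron_span.zero)
  next
    case (step M X Y c)
    have c: "X \<in> carrier_mat n n" "Y \<in> carrier_mat n n"
      "M \<in> carrier_mat (n * n) (n * n)" "N \<in> carrier_mat (n * n) (n * n)"
      using step carrier kron_span_carrier[OF step(1)] kron_span_carrier[OF N] by auto
    have "(c \<cdot>\<^sub>m kron (mconj X) Y + M) * N = c \<cdot>\<^sub>m (kron (mconj X) Y * N) + M * N"
      using c by (simp add: add_mult_distrib_mat[of _ "n * n" "n * n" _ _ "n * n"]
          mult_smult_assoc_mat[of _ "n * n" "n * n" _ "n * n"])
    then show ?case
      using step N by (auto intro!: kron_span_add kron_span_smult kron_span_mult_kron)
  qed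
qed

end

section \<open>Matricization of Lyapunov operators\<close>

definition lyap_mat :: "nat \<Rightarrow> 'a::conjugatable_field mat \<Rightarrow> 'a mat" where
  "lyap_mat n Y = kron (mconj (madj Y)) (1\<^sub>m n) + kron (1\<^sub>m n) (madj Y)"

lemma lyap_mat_carrier [simp]: "Y \<in> carrier_mat n n \<Longrightarrow> lyap_mat n Y \<in> carrier_mat (n * n) (n * n)"
  by (auto simp: lyap_mat_def)

lemma lyap_mat_vecm:
  fixes Y X :: "'a::conjugatable_field mat"
  assumes Y: "Y \<in> carrier_mat n n" and X: "X \<in> carrier_mat n n"
  shows "lyap_mat n Y *\<^sub>v vecm X = vecm (lyap Y X)"
proof -
  have "lyap_mat n Y *\<^sub>v vecm X
      = kron (mconj (madj Y)) (1\<^sub>m n) *\<^sub>v vecm X + kron (1\<^sub>m n) (madj Y) *\<^sub>v vecm X"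
    unfolding lyap_mat_def using X Y by (intro add_mult_distrib_mat_vec[of _ "n * n" "n * n"]) auto
  also have "kron (mconj (madj Y)) (1\<^sub>m n) *\<^sub>v vecm X = vecm (X * Y)"
    using X Y by (simp add: kron_mult_vecm[of _ n] transpose_mconj_madj)
  also have "kron (1\<^sub>m n) (madj Y) *\<^sub>v vecm X = vecm (madj Y * X)"
    using X Y by (simp add: kron_mult_vecm[of _ n])
  also have "vecm (X * Y) + vecm (madj Y * X) = vecm (lyap Y X)"
    unfolding lyap_def using X Y by (intro vecm_add[symmetric]) auto
  finally show ?thesis .
qed

lemma lyap_mat_in_kron_span:
  assumes alg: "mat_algebra n S" and Y: "madj Y \<in> S"
  shows "lyap_mat n Y \<in> kron_span n S"
proof -
  interpret mat_algebra n S by (rule alg)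
  have "kron (mconj (madj Y)) (1\<^sub>m n) \<in> kron_span n S"
    by (rule kron_in_kron_span[OF alg Y one_closed])
  moreover have "kron (mconj (1\<^sub>m n)) (madj Y) \<in> kron_span n S"
    by (rule kron_in_kron_span[OF alg one_closed Y])
  ultimately show ?thesis
    unfolding lyap_mat_def by (simp add: kron_span_add[OF alg])
qed

lemma det_lyap_mat_nonzero:
  fixes A :: "'a::conjugatable_field mat"
  assumes A: "A \<in> carrier_mat n n"
    and injective: "\<And>X. X \<in> carrier_mat n n \<Longrightarrow> lyap A X = 0\<^sub>m n n \<Longrightarrow> X = 0\<^sub>m n n"
  shows "det (lyap_mat n A) \<noteq> 0"
proof
  assume "det (lyap_mat n A) = 0"
  then obtain v where v: "v \<in> carrier_vec (n * n)" "v \<noteq> 0\<^sub>v (n * n)" "lyap_mat n A *\<^sub>v v = 0\<^sub>v (n * n)"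
    using det_0_iff_vec_prod_zero[OF lyap_mat_carrier[OF A]] by auto
  obtain X where X: "X \<in> carrier_mat n n" and vX: "vecm X = v" using vecm_surj[OF v(1)] by blast
  have "vecm (lyap A X) = vecm (0\<^sub>m n n)"
    using lyap_mat_vecm[OF A X] v(3) by (simp add: vX vecm_zero)
  then have "lyap A X = 0\<^sub>m n n" using A X by (intro vecm_inj[of _ n]) (auto simp: lyap_def)
  then have "v = 0\<^sub>v (n * n)" using injective[OF X] vX by (simp add: vecm_zero)
  with v(2) show False ..
qed

lemma vecm_lyapAB:
  fixes A B R :: "'a::conjugatable_field mat"
  assumes A: "A \<in> carrier_mat n n" and B: "B \<in> carrier_mat n n"
    and R: "R \<in> carrier_mat (n * n) (n * n)" and inv: "lyap_mat n A * R = 1\<^sub>m (n * n)"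
    and V: "V \<in> carrier_mat n n"
  shows "vecm (lyapAB A B V) = (lyap_mat n B * R) *\<^sub>v vecm V"
proof -
  have La: "lyap_mat n A \<in> carrier_mat (n * n) (n * n)" using A by simp
  have inv': "R * lyap_mat n A = 1\<^sub>m (n * n)" using mat_mult_left_right_inverse[OF La R inv] .
  obtain X0 where X0: "X0 \<in> carrier_mat n n" and vX0: "vecm X0 = R *\<^sub>v vecm V"
    using vecm_surj[of "R *\<^sub>v vecm V" n] R V by auto
  have "vecm (lyap A X0) = (lyap_mat n A * R) *\<^sub>v vecm V"
    using lyap_mat_vecm[OF A X0] La R V by (simp add: vX0)
  then have "vecm (lyap A X0) = vecm V" using V by (simp add: inv)
  then have sol: "lyap A X0 = V" using A X0 V by (intro vecm_inj[of _ n]) (auto simp: lyap_def)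
  have "(THE X. X \<in> carrier_mat (dim_row A) (dim_row A) \<and> lyap A X = V) = X0"
  proof (rule the_equality)
    show "X0 \<in> carrier_mat (dim_row A) (dim_row A) \<and> lyap A X0 = V" using X0 sol A by simp
    fix X assume "X \<in> carrier_mat (dim_row A) (dim_row A) \<and> lyap A X = V"
    then have X: "X \<in> carrier_mat n n" and solX: "lyap A X = V" using A by auto
    have "vecm X = (R * lyap_mat n A) *\<^sub>v vecm X" using X by (simp add: inv')
    also have "\<dots> = R *\<^sub>v vecm V" using R La X by (simp add: lyap_mat_vecm[OF A X] solX)
    finally show "X = X0" using X X0 vX0 by (intro vecm_inj[of _ n]) auto
  qed
  then have "vecm (lyapAB A B V) = lyap_mat n B *\<^sub>v vecm X0"
    unfolding lyapAB_def using lyap_mat_vecm[OF B X0] by simp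
  then show ?thesis using B R V by (simp add: vX0 assoc_mult_mat_vec[of _ "n * n" "n * n" R "n * n"])
qed

lemma matricization_lyapAB_eq:
  fixes A B R L :: "'a::conjugatable_field mat"
  assumes A: "A \<in> carrier_mat n n" and B: "B \<in> carrier_mat n n"
    and R: "R \<in> carrier_mat (n * n) (n * n)" and inv: "lyap_mat n A * R = 1\<^sub>m (n * n)"
    and L: "L \<in> carrier_mat (n * n) (n * n)"
    and matricization: "\<forall>V\<in>carrier_mat n n. L *\<^sub>v vecm V = vecm (lyapAB A B V)"
  shows "L = lyap_mat n B * R"
proof (rule eq_mat_by_mult_vec[OF L])
  fix v :: "'a vec" assume "v \<in> carrier_vec (n * n)"
  then obtain V where V: "V \<in> carrier_mat n n" and "vecm V = v" using vecm_surj by blast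
  then show "L *\<^sub>v v = (lyap_mat n B * R) *\<^sub>v v"
    using matricization vecm_lyapAB[OF A B R inv V] by auto
qed (use mult_carrier_mat[OF lyap_mat_carrier[OF B] R] in simp)

lemma matricization_in_span_if_lyap_injective:
  fixes A B :: "'a::conjugatable_field mat"
  assumes A: "A \<in> carrier_mat n n" and B: "B \<in> bicommutant n A"
    and injective: "\<And>X. X \<in> carrier_mat n n \<Longrightarrow> lyap A X = 0\<^sub>m n n \<Longrightarrow> X = 0\<^sub>m n n"
    and cayley_hamilton: "\<And>M :: 'a mat. M \<in> carrier_mat (n * n) (n * n) \<Longrightarrow>
      poly_mat (char_poly M) M = 0\<^sub>m (n * n) (n * n)"
  shows "matricization_in_span n A B"
proof -
  let ?K = "kron_span n (bicommutant n (madj A))"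
  interpret K: mat_algebra "n * n" ?K
    by (intro mat_algebra_kron_span mat_algebra_bicommutant)
  have La: "lyap_mat n A \<in> ?K"
    using A by (intro lyap_mat_in_kron_span mat_algebra_bicommutant) (simp add: self_in_bicommutant)
  have Lb: "lyap_mat n B \<in> ?K"
    using A B by (intro lyap_mat_in_kron_span mat_algebra_bicommutant madj_in_bicommutant_madj)
  have "det (lyap_mat n A) \<noteq> 0" using A injective by (rule det_lyap_mat_nonzero)
  then obtain R where R: "R \<in> ?K" and inv: "lyap_mat n A * R = 1\<^sub>m (n * n)"
    using K.inverse_closed[OF La _ cayley_hamilton[OF lyap_mat_carrier[OF A]]] by auto
  have Bc: "B \<in> carrier_mat n n" using B by (auto simp: bicommutant_def commutant_def)
  have Rc: "R \<in> carrier_mat (n * n) (n * n)" using R K.carrier by auto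
  show ?thesis
    unfolding matricization_in_span_def
    using matricization_lyapAB_eq[OF A Bc Rc inv] K.mult_closed[OF Lb R] by auto
qed

section \<open>Injectivity of the Lyapunov operator\<close>

lemma det_poly_mat_linear_factors:
  fixes C :: "'a::field mat"
  assumes C: "C \<in> carrier_mat n n"
  shows "det (poly_mat (\<Prod>e\<leftarrow>es. [:- e, 1:]) C) = (\<Prod>e\<leftarrow>es. det (char_matrix C e))"
proof (induction es)
  case Nil
  then show ?case using C by simp
next
  case (Cons e es)
  have "poly_mat (\<Prod>e\<leftarrow>e # es. [:- e, 1:]) C = char_matrix C e * poly_mat (\<Prod>e\<leftarrow>es. [:- e, 1:]) C"
    by (simp only: list.map prod_list.Cons poly_mat_mult[OF C] poly_mat_linear[OF C])
  then show ?case using C Cons.IH by (simp add: det_mult[of _ n])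
qed

lemma det_nonzero_mult_zero_mat:
  fixes G X :: "'a::idom mat"
  assumes G: "G \<in> carrier_mat n n" and det: "det G \<noteq> 0" and X: "X \<in> carrier_mat n m"
    and GX: "G * X = 0\<^sub>m n m"
  shows "X = 0\<^sub>m n m"
proof (rule eq_matI)
  fix i j assume i: "i < dim_row (0\<^sub>m n m :: 'a mat)" and j: "j < dim_col (0\<^sub>m n m :: 'a mat)"
  have jm: "j < m" using j by simp
  have "G *\<^sub>v col X j = col (G * X) j" by (rule col_mult2[OF G X jm, symmetric])
  also have "\<dots> = 0\<^sub>v n" unfolding GX using jm by simp
  finally have "G *\<^sub>v col X j = 0\<^sub>v n" .
  moreover have "col X j \<in> carrier_vec n" using X jm by (rule col_carrier_vec[rotated])
  ultimately have col: "col X j = 0\<^sub>v n"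
    using det det_0_iff_vec_prod_zero[OF G] by blast
  have "X $$ (i, j) = col X j $ i" using X i jm by simp
  then show "X $$ (i, j) = 0\<^sub>m n m $$ (i, j)" using i jm by (simp add: col)
qed (use X in auto)

interpretation cnj_hom: comm_ring_hom cnj by unfold_locales auto

lemma det_madj_complex:
  assumes G: "(G :: complex mat) \<in> carrier_mat n n"
  shows "det (madj G) = cnj (det G)"
proof -
  have "madj G = transpose_mat (cnj_hom.mat_hom G)" by (rule eq_matI) auto
  then show ?thesis using G by (simp add: det_transpose[of _ n])
qed

lemma eigenvalue_uminus_madj:
  fixes A :: "complex mat"
  assumes A: "A \<in> carrier_mat n n" and e: "eigenvalue (- madj A) e"
  shows "eigenvalue A (- cnj e)"
proof -
  have "char_matrix (- madj A) e = - madj (char_matrix A (- cnj e))"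
    by (rule eq_matI) (use A in \<open>auto simp: char_matrix_def\<close>)
  then have "det (- madj (char_matrix A (- cnj e))) = 0"
    using e eigenvalue_det[of "- madj A" n] A by simp
  then have "det (madj (char_matrix A (- cnj e))) = 0"
    using det_0_negate[of "madj (char_matrix A (- cnj e))" n] A by simp
  then show ?thesis using eigenvalue_det[OF A] det_madj_complex[of _ n] A by simp
qed

lemma lyap_zero_intertwines:
  fixes A X :: "'a::conjugatable_field mat"
  assumes A: "A \<in> carrier_mat n n" and X: "X \<in> carrier_mat n n" and L: "lyap A X = 0\<^sub>m n n"
  shows "X * A = (- madj A) * X"
proof (rule eq_matI)
  fix i j assume ij: "i < dim_row ((- madj A) * X)" "j < dim_col ((- madj A) * X)"
  have "(X * A + madj A * X) $$ (i, j) = 0" using L ij A X by (simp add: lyap_def)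
  then have "(X * A) $$ (i, j) = - (madj A * X) $$ (i, j)" using ij X A by (simp add: add_eq_0_iff)
  also have "\<dots> = ((- madj A) * X) $$ (i, j)"
    using ij X A by (simp add: scalar_prod_def sum_negf[symmetric])
  finally show "(X * A) $$ (i, j) = ((- madj A) * X) $$ (i, j)" .
qed (use X A in auto)

text \<open>Regularity says that no root of the characteristic polynomial of \<open>A\<close> is an eigenvalue
  of \<open>-A\<^sup>*\<close>.\<close>
lemma det_char_poly_uminus_madj_nonzero:
  fixes A :: "complex mat"
  assumes A: "A \<in> carrier_mat n n" and reg: "lyap_regular A"
  shows "det (poly_mat (char_poly A) (- madj A)) \<noteq> 0"
proof -
  have C: "- madj A \<in> carrier_mat n n" using A by simp
  obtain es where cp: "char_poly A = (\<Prod>e\<leftarrow>es. [:- e, 1:])"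
    using char_poly_factorized[OF A] by blast
  have "det (char_matrix (- madj A) e) \<noteq> 0" if "e \<in> set es" for e
  proof
    assume "det (char_matrix (- madj A) e) = 0"
    then have "eigenvalue A (- cnj e)"
      using eigenvalue_uminus_madj[OF A] eigenvalue_det[OF C] by simp
    moreover have "eigenvalue A e"
      using that eigenvalue_root_char_poly[OF A] by (simp add: cp linear_poly_root)
    ultimately have "e + cnj (- cnj e) \<noteq> 0" using reg unfolding lyap_regular_def by blast
    then show False by simp
  qed
  then show ?thesis
    using det_poly_mat_linear_factors[OF C, of es] by (auto simp: cp prod_list_zero_iff)
qed

text \<open>\<open>X\<close> intertwines \<open>A\<close> with \<open>-A\<^sup>*\<close>, so \<open>p(-A\<^sup>*) X = X p(A) = 0\<close> for the
  characteristic polynomial \<open>p\<close> of \<open>A\<close>.\<close>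
lemma lyap_injective_complex:
  fixes A X :: "complex mat"
  assumes A: "A \<in> carrier_mat n n" and reg: "lyap_regular A"
    and X: "X \<in> carrier_mat n n" and L: "lyap A X = 0\<^sub>m n n"
  shows "X = 0\<^sub>m n n"
proof -
  have C: "- madj A \<in> carrier_mat n n" using A by simp
  have "poly_mat (char_poly A) (- madj A) * X = X * poly_mat (char_poly A) A"
    using poly_mat_intertwine[OF A C X lyap_zero_intertwines[OF A X L]] by simp
  also have "\<dots> = 0\<^sub>m n n" using A X by (simp add: cayley_hamilton_complex)
  finally show ?thesis
    using det_nonzero_mult_zero_mat[OF _ det_char_poly_uminus_madj_nonzero[OF A reg] X] C by simp
qed

lemma lyap_injective_real:
  fixes A X :: "real mat"
  assumes A: "A \<in> carrier_mat n n" and reg: "lyap_regular (map_mat complex_of_real A)"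
    and X: "X \<in> carrier_mat n n" and L: "lyap A X = 0\<^sub>m n n"
  shows "X = 0\<^sub>m n n"
proof -
  let ?h = "map_mat complex_of_real"
  have "?h (lyap A X) = ?h (X * A) + ?h (madj A * X)"
    by (rule eq_matI) (use A X in \<open>auto simp: lyap_def\<close>)
  also have "?h (X * A) = ?h X * ?h A" by (rule of_real_hom.mat_hom_mult[OF X A])
  also have "?h (madj A * X) = ?h (madj A) * ?h X" using A X by (intro of_real_hom.mat_hom_mult) auto
  also have "?h (madj A) = madj (?h A)" by (rule eq_matI) auto
  finally have "lyap (?h A) (?h X) = ?h (lyap A X)" by (simp add: lyap_def)
  also have "\<dots> = 0\<^sub>m n n" using L by (auto intro: eq_matI)
  finally have "map_mat complex_of_real X = 0\<^sub>m n n"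
    using lyap_injective_complex[OF _ reg] A X by simp
  also have "(0\<^sub>m n n :: complex mat) = map_mat complex_of_real (0\<^sub>m n n)" by (rule eq_matI) auto
  finally show ?thesis by (rule of_real_hom.mat_hom_inj)
qed

theorem lemma4p1:
  shows "(\<forall>(n::nat) (A::complex mat) B. A \<in> carrier_mat n n \<and> lyap_regular A \<and> B \<in> bicommutant n A
            \<longrightarrow> matricization_in_span n A B)
       \<and> (\<forall>(n::nat) (A::real mat) B. A \<in> carrier_mat n n \<and> lyap_regular (map_mat complex_of_real A)
            \<and> B \<in> bicommutant n A \<longrightarrow> matricization_in_span n A B)"
proof (intro conjI allI impI; elim conjE)
  fix n :: nat and A B :: "complex mat"
  assume A: "A \<in> carrier_mat n n" and reg: "lyap_regular A" and B: "B \<in> bicommutant n A"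
  show "matricization_in_span n A B"
    using lyap_injective_complex[OF A reg] cayley_hamilton_complex
    by (rule matricization_in_span_if_lyap_injective[OF A B])
next
  fix n :: nat and A B :: "real mat"
  assume A: "A \<in> carrier_mat n n" and reg: "lyap_regular (map_mat complex_of_real A)"
    and B: "B \<in> bicommutant n A"
  show "matricization_in_span n A B"
    using lyap_injective_real[OF A reg] cayley_hamilton_real
    by (rule matricization_in_span_if_lyap_injective[OF A B])
qed

end
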